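(* Let $n\ge2$ and let $T_1,\dots,T_n$ be distinct triangles in $E$, and let $S$ be the set of vertices of the polygon $\bigcap_{i=1}^nT_i$. Then $|S|=3n$.
   Context: For $d>0$ let $C_d=\{(x,y)\in\mathbb{R}^2: x^2+y^2\le d\}$, and $C=C_1$. $E$ is the set of all equilateral triangles $T\subseteq C$ whose vertices lie on the boundary of $C$. *)

theory Defs
  imports "HOL-Analysis.Analysis"
begin

text \<open>The closed disc of radius squared d in the plane (points as pairs of reals).\<close>
definition Cd :: "real \<Rightarrow> (real \<times> real) set" where
  "Cd d = {(x, y). x\<^sup>2 + y\<^sup>2 \<le> d}"

definition C :: "(real \<times> real) set" where
  "C = Cd 1"

definition E :: "(real \<times> real) set set" where
  "E = {T. \<exists>a b c. T = convex hull {a, b, c} \<and> a \<noteq> b \<and>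
          dist a b = dist b c \<and> dist b c = dist c a \<and>
          T \<subseteq> C \<and> a \<in> frontier C \<and> b \<in> frontier C \<and> c \<in> frontier C}"

definition polygon_vertices :: "(real \<times> real) set \<Rightarrow> (real \<times> real) set" where
  "polygon_vertices P = {p. p extreme_point_of P}"

end

theory Submission
  imports Defs
begin

text \<open>
  Each triangle in \<open>E\<close> is equilateral and inscribed in the unit circle, so its vertices
  \<open>a, b, c\<close> are unit vectors with \<open>a + b + c = 0\<close>, and the triangle is the set
  \<open>{x. \<forall>u \<in> {-a,-b,-c}. \<langle>x, u\<rangle> \<le> 1/2}\<close>: its sides lie on lines tangent to the circle of
  radius \<open>1/2\<close>. One vertex determines the other two, so distinct triangles have disjoint
  normal sets and \<open>\<Inter>T\<^sub>i\<close> is cut out by \<open>3n\<close> distinct tangent lines.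

  For a bounded polygon \<open>{x. \<forall>u \<in> U. \<langle>x, u\<rangle> \<le> r}\<close> with finitely many unit normals, every
  tangent line carries a nondegenerate side (the tangent point \<open>r u\<close> satisfies no other
  constraint with equality), hence exactly two vertices; and every vertex lies on exactly two
  of the lines: on at least two because it is extreme, on at most two because a line meets the
  unit circle in at most two points. Double counting the incidences gives \<open>#vertices = |U|\<close>.
\<close>

definition rot90 :: "real \<times> real \<Rightarrow> real \<times> real" where
  "rot90 u = (- snd u, fst u)"

lemma inner_rot90_self [simp]: "inner (rot90 u) u = 0" "inner u (rot90 u) = 0"
  by (simp_all add: rot90_def inner_prod_def)

lemma norm_rot90 [simp]: "norm (rot90 u) = norm u"
  by (simp add: rot90_def norm_prod_def add.commute)

lemma rot90_eq_0_iff [simp]: "rot90 u = 0 \<longleftrightarrow> u = 0"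
  by (cases u) (auto simp: rot90_def zero_prod_def)

lemma rot90_frame:
  "(norm u)\<^sup>2 *\<^sub>R x = inner u x *\<^sub>R u + inner (rot90 u) x *\<^sub>R rot90 u"
  by (cases u; cases x) (simp add: rot90_def inner_prod_def norm_prod_def power2_eq_square algebra_simps)

lemma inner_rot90_Lagrange:
  "(inner u x)\<^sup>2 + (inner (rot90 u) x)\<^sup>2 = (norm u)\<^sup>2 * (norm x)\<^sup>2"
  by (cases u; cases x) (simp add: rot90_def inner_prod_def norm_prod_def power2_eq_square algebra_simps)

lemma rot90_coordinates_eqI:
  assumes "u \<noteq> 0" "inner u x = inner u y" "inner (rot90 u) x = inner (rot90 u) y"
  shows "x = y"
proof -
  have "(norm u)\<^sup>2 *\<^sub>R x = (norm u)\<^sup>2 *\<^sub>R y"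
    using rot90_frame[of u x] rot90_frame[of u y] assms(2,3) by simp
  then show ?thesis
    using assms(1) by simp
qed

lemma orthogonal_to_independent_pair:
  assumes "inner (rot90 u) v \<noteq> 0" "inner y u = 0" "inner y v = 0"
  shows "y = 0"
proof -
  have "u \<noteq> 0"
    using assms(1) by (metis inner_zero_left rot90_eq_0_iff)
  have frame: "(norm u)\<^sup>2 *\<^sub>R y = inner (rot90 u) y *\<^sub>R rot90 u"
    using rot90_frame[of u y] assms(2) by (simp add: inner_commute)
  then have "(norm u)\<^sup>2 * inner y v = inner (rot90 u) y * inner (rot90 u) v"
    by (metis inner_scaleR_left)
  then have "inner (rot90 u) y = 0"
    using assms(1,3) by simp
  then show ?thesis
    using frame \<open>u \<noteq> 0\<close> by simp
qed

lemma exists_orthogonal_nonzero: "\<exists>d::real \<times> real. d \<noteq> 0 \<and> inner d u = 0"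
proof (cases "u = 0")
  case True
  then show ?thesis
    by (intro exI[of _ "(1, 0)"]) (simp add: zero_prod_def)
next
  case False
  then show ?thesis
    by (intro exI[of _ "rot90 u"]) simp
qed

lemma finite_card_sphere_Int_line:
  fixes p :: "real \<times> real"
  assumes "p \<noteq> 0"
  shows "finite {x. norm x = 1 \<and> inner p x = c} \<and> card {x. norm x = 1 \<and> inner p x = c} \<le> 2"
proof -
  define S where "S = {x. norm x = 1 \<and> inner p x = c}"
  define s where "s = sqrt ((norm p)\<^sup>2 - c\<^sup>2)"
  have inj: "inj_on (inner (rot90 p)) S"
    by (rule inj_onI) (use assms rot90_coordinates_eqI in \<open>auto simp: S_def\<close>)
  have "inner (rot90 p) ` S \<subseteq> {s, - s}"
  proof
    fix t assume "t \<in> inner (rot90 p) ` S"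
    then obtain x where "x \<in> S" "t = inner (rot90 p) x"
      by blast
    then have "t\<^sup>2 = (norm p)\<^sup>2 - c\<^sup>2"
      using inner_rot90_Lagrange[of p x] by (simp add: S_def)
    moreover have "0 \<le> t\<^sup>2"
      by simp
    ultimately have "t\<^sup>2 = s\<^sup>2"
      by (simp add: s_def)
    then show "t \<in> {s, - s}"
      by (auto simp: power2_eq_iff)
  qed
  moreover have "card {s, - s} \<le> 2"
    by (cases "s = - s") auto
  ultimately have "finite (inner (rot90 p) ` S) \<and> card (inner (rot90 p) ` S) \<le> 2"
    by (meson card_mono finite.emptyI finite.insertI finite_subset le_trans)
  then show ?thesis
    using inj by (simp add: S_def[symmetric] finite_image_iff card_image)
qed

text \<open>With unit normals \<open>U\<close> this is the polygon whose side lines are tangent to the circle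
  of radius \<open>r\<close>.\<close>

definition tangential_polytope :: "real \<Rightarrow> 'a::real_inner set \<Rightarrow> 'a set" where
  "tangential_polytope r U = {x. \<forall>u\<in>U. inner x u \<le> r}"

lemma convex_tangential_polytope: "convex (tangential_polytope r U)"
proof -
  have "tangential_polytope r U = (\<Inter>u\<in>U. {x. inner u x \<le> r})"
    by (auto simp: tangential_polytope_def inner_commute)
  then show ?thesis
    by (simp add: convex_INT convex_halfspace_le)
qed

lemma closed_tangential_polytope: "closed (tangential_polytope r U)"
proof -
  have "tangential_polytope r U = (\<Inter>u\<in>U. {x. inner u x \<le> r})"
    by (auto simp: tangential_polytope_def inner_commute)
  then show ?thesis
    by (simp add: closed_INT closed_halfspace_le)
qed

lemma tangential_polytope_UN:
  "(\<Inter>i\<in>I. tangential_polytope r (N i)) = tangential_polytope r (\<Union>i\<in>I. N i)"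
  by (auto simp: tangential_polytope_def)

lemma tangential_polytope_perturb:
  fixes p d :: "'a::real_inner"
  assumes "finite U" "p \<in> tangential_polytope r U"
    and "\<forall>u\<in>U. inner p u = r \<longrightarrow> inner d u = 0"
  shows "\<exists>e>0. p + e *\<^sub>R d \<in> tangential_polytope r U \<and> p - e *\<^sub>R d \<in> tangential_polytope r U"
proof -
  have "\<forall>\<^sub>F e in at 0. inner (p + e *\<^sub>R d) u \<le> r" if "u \<in> U" for u
  proof (cases "inner p u = r")
    case True
    then show ?thesis
      using assms(3) that by (simp add: inner_add_left)
  next
    case False
    then have lt: "inner p u < r"
      using assms(2) that by (force simp: tangential_polytope_def)
    have "((\<lambda>e. inner (p + e *\<^sub>R d) u) \<longlongrightarrow> inner p u) (at 0)"
      by (intro tendsto_eq_intros) auto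
    from order_tendstoD(2)[OF this lt] show ?thesis
      by (rule eventually_mono) simp
  qed
  then have "\<forall>\<^sub>F e in at 0. p + e *\<^sub>R d \<in> tangential_polytope r U"
    by (simp add: tangential_polytope_def eventually_ball_finite assms(1))
  then obtain \<delta> where "\<delta> > 0"
    and \<delta>: "\<And>e. e \<noteq> 0 \<Longrightarrow> \<bar>e\<bar> < \<delta> \<Longrightarrow> p + e *\<^sub>R d \<in> tangential_polytope r U"
    by (auto simp: eventually_at dist_real_def)
  then show ?thesis
    using \<delta>[of "\<delta>/2"] \<delta>[of "-\<delta>/2"] by (intro exI[of _ "\<delta>/2"]) auto
qed

lemma active_at_tangent_point:
  fixes U :: "'a::real_inner set"
  assumes "\<forall>v\<in>U. norm v = 1" "r > 0" "u \<in> U"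
  shows "r *\<^sub>R u \<in> tangential_polytope r U" and "{v\<in>U. inner (r *\<^sub>R u) v = r} = {u}"
proof -
  have le: "inner u v \<le> 1" if "v \<in> U" for v
    using norm_cauchy_schwarz[of u v] assms that by simp
  then show "r *\<^sub>R u \<in> tangential_polytope r U"
    using assms(2) by (simp add: tangential_polytope_def)
  have "v = u" if "v \<in> U" "inner u v = 1" for v
    using norm_cauchy_schwarz_eq[of u v] assms that by simp
  then show "{v\<in>U. inner (r *\<^sub>R u) v = r} = {u}"
    using assms by (auto simp: dot_square_norm)
qed

lemma line_section_interval:
  fixes S :: "'a::real_normed_vector set"
  assumes "compact S" "convex S" "w \<noteq> 0"
  obtains s1 s2 where "{s. a + s *\<^sub>R w \<in> S} = {s1..s2}"
proof -
  define I where "I = {s. a + s *\<^sub>R w \<in> S}"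
  have "continuous_on UNIV (\<lambda>s::real. a + s *\<^sub>R w)"
    by (intro continuous_intros)
  then have "closed I"
    unfolding I_def vimage_def[symmetric]
    using closed_vimage compact_imp_closed[OF assms(1)] by blast
  moreover have "bounded I"
  proof -
    obtain B where B: "\<And>x. x \<in> S \<Longrightarrow> norm x \<le> B"
      using assms(1) compact_imp_bounded bounded_iff by metis
    have "\<bar>s\<bar> \<le> (B + norm a) / norm w" if "s \<in> I" for s
    proof -
      have "\<bar>s\<bar> * norm w \<le> norm (a + s *\<^sub>R w) + norm a"
        using norm_triangle_ineq4[of "a + s *\<^sub>R w" a] by simp
      also have "\<dots> \<le> B + norm a"
        using B that by (simp add: I_def)
      finally show ?thesis
        using assms(3) by (simp add: field_simps)
    qed
    then show ?thesis
      by (auto simp: bounded_real)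
  qed
  moreover have "convex I"
  proof (rule convexI)
    fix s t u v :: real
    assume "s \<in> I" "t \<in> I" "0 \<le> u" "0 \<le> v" "u + v = 1"
    moreover have "a + (u * s + v * t) *\<^sub>R w = u *\<^sub>R (a + s *\<^sub>R w) + v *\<^sub>R (a + t *\<^sub>R w)"
      using \<open>u + v = 1\<close> by (simp add: algebra_simps flip: scaleR_add_left)
    ultimately show "u *\<^sub>R s + v *\<^sub>R t \<in> I"
      using assms(2) by (simp add: I_def convex_def)
  qed
  ultimately show ?thesis
    using that connected_compact_interval_1 convex_connected compact_eq_bounded_closed
    by (metis I_def)
qed

lemma image_line_atLeastAtMost:
  fixes a w :: "'a::real_vector"
  assumes "s1 \<le> s2"
  shows "(\<lambda>s. a + s *\<^sub>R w) ` {s1..s2} = closed_segment (a + s1 *\<^sub>R w) (a + s2 *\<^sub>R w)"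
proof -
  have "closed_segment (a + s1 *\<^sub>R w) (a + s2 *\<^sub>R w) = (\<lambda>x. a + x) ` closed_segment (s1 *\<^sub>R w) (s2 *\<^sub>R w)"
    by (rule closed_segment_translation)
  also have "closed_segment (s1 *\<^sub>R w) (s2 *\<^sub>R w) = (\<lambda>s. s *\<^sub>R w) ` closed_segment s1 s2"
    by (rule closed_segment_linear_image[OF linear_scaleR_left])
  also have "closed_segment s1 s2 = {s1..s2}"
    using assms by (simp add: closed_segment_eq_real_ivl)
  finally show ?thesis
    by (simp add: image_image)
qed

lemma card_active_ge_2_if_extreme_point:
  fixes U :: "(real \<times> real) set"
  assumes "finite U" and extreme: "p extreme_point_of tangential_polytope r U"
  shows "2 \<le> card {u\<in>U. inner p u = r}"
proof (rule ccontr)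
  define A where "A = {u\<in>U. inner p u = r}"
  assume "\<not> 2 \<le> card {u\<in>U. inner p u = r}"
  then have "card A \<le> Suc 0"
    by (simp add: A_def)
  moreover have "finite A"
    using assms(1) by (simp add: A_def)
  ultimately have "\<forall>u\<in>A. \<forall>v\<in>A. u = v"
    using card_le_Suc0_iff_eq by blast
  then obtain u0 where "A \<subseteq> {u0}"
    by (cases "A = {}") blast+
  obtain d where "d \<noteq> 0" "inner d u0 = 0"
    using exists_orthogonal_nonzero by blast
  then have "\<forall>u\<in>U. inner p u = r \<longrightarrow> inner d u = 0"
    using \<open>A \<subseteq> {u0}\<close> by (auto simp: A_def)
  then obtain e where "e > 0" and in_P: "p - e *\<^sub>R d \<in> tangential_polytope r U"
      "p + e *\<^sub>R d \<in> tangential_polytope r U"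
    using tangential_polytope_perturb[OF assms(1)] extreme by (meson extreme_point_of_def)
  have "(p + e *\<^sub>R d) - (p - e *\<^sub>R d) = (2 * e) *\<^sub>R d"
    by (simp add: algebra_simps flip: scaleR_2)
  then have "p - e *\<^sub>R d \<noteq> p + e *\<^sub>R d"
    using \<open>d \<noteq> 0\<close> \<open>e > 0\<close> by force
  moreover have "midpoint (p - e *\<^sub>R d) (p + e *\<^sub>R d) = p"
    by (simp add: midpoint_def flip: scaleR_2)
  ultimately have "p \<in> open_segment (p - e *\<^sub>R d) (p + e *\<^sub>R d)"
    by (metis midpoint_in_open_segment)
  then show False
    using extreme in_P by (auto simp: extreme_point_of_def)
qed

lemma card_active_le_2:
  fixes U :: "(real \<times> real) set"
  assumes "\<forall>u\<in>U. norm u = 1" "r \<noteq> 0"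
  shows "finite {u\<in>U. inner p u = r} \<and> card {u\<in>U. inner p u = r} \<le> 2"
proof (cases "p = 0")
  case True
  then show ?thesis
    using assms(2) by simp
next
  case False
  have "{u\<in>U. inner p u = r} \<subseteq> {x. norm x = 1 \<and> inner p x = r}"
    using assms(1) by auto
  then show ?thesis
    using finite_card_sphere_Int_line[OF False, of r] by (meson card_mono finite_subset le_trans)
qed

lemma card_extreme_points_on_side:
  fixes U :: "(real \<times> real) set" and r :: real
  defines "P \<equiv> tangential_polytope r U"
  assumes "finite U" "\<forall>v\<in>U. norm v = 1" "r > 0" "bounded P" "u \<in> U"
  shows "finite {p. p extreme_point_of P \<and> inner p u = r}
       \<and> card {p. p extreme_point_of P \<and> inner p u = r} = 2"
proof -
  define F where "F = P \<inter> {x. inner u x = r}"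
  define f where "f s = r *\<^sub>R u + s *\<^sub>R rot90 u" for s
  have unit_u: "norm u = 1"
    using assms(3,6) by blast
  have face: "F face_of P"
    unfolding F_def P_def
    by (rule face_of_Int_supporting_hyperplane_le[OF convex_tangential_polytope])
       (use assms(6) in \<open>auto simp: tangential_polytope_def inner_commute\<close>)
  have "p extreme_point_of F \<longleftrightarrow> p extreme_point_of P \<and> inner p u = r" for p
  proof -
    have "p extreme_point_of P \<Longrightarrow> p \<in> P"
      by (simp add: extreme_point_of_def)
    then show ?thesis
      unfolding extreme_point_of_face[OF face] by (auto simp: F_def inner_commute)
  qed
  then have extreme_side: "{p. p extreme_point_of P \<and> inner p u = r} = {p. p extreme_point_of F}"
    by blast
  have "compact P"
    using assms(5) closed_tangential_polytope by (simp add: P_def compact_eq_bounded_closed)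
  moreover have "convex P"
    by (simp add: P_def convex_tangential_polytope)
  moreover have "rot90 u \<noteq> 0"
    using unit_u by auto
  ultimately obtain s1 s2 where I: "{s. f s \<in> P} = {s1..s2}"
    unfolding f_def by (rule line_section_interval)
  have "F = f ` {s. f s \<in> P}"
  proof
    show "F \<subseteq> f ` {s. f s \<in> P}"
    proof
      fix x assume "x \<in> F"
      define t where "t = inner (rot90 u) x"
      have "x = f t"
        using rot90_frame[of u x] unit_u \<open>x \<in> F\<close> by (simp add: F_def f_def t_def)
      moreover have "f t \<in> P"
        using \<open>x \<in> F\<close> \<open>x = f t\<close> by (simp add: F_def)
      ultimately show "x \<in> f ` {s. f s \<in> P}"
        by blast
    qed
    show "f ` {s. f s \<in> P} \<subseteq> F"
      using unit_u by (auto simp: F_def f_def inner_add_right dot_square_norm)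
  qed
  note tangent = active_at_tangent_point[OF assms(3,4,6)]
  have "\<forall>v\<in>U. inner (r *\<^sub>R u) v = r \<longrightarrow> inner (rot90 u) v = 0"
  proof (intro ballI impI)
    fix v assume "v \<in> U" "inner (r *\<^sub>R u) v = r"
    then have "v = u"
      using tangent(2) by blast
    then show "inner (rot90 u) v = 0"
      by simp
  qed
  then obtain e where "e > 0" "r *\<^sub>R u + e *\<^sub>R rot90 u \<in> P" "r *\<^sub>R u - e *\<^sub>R rot90 u \<in> P"
    using tangential_polytope_perturb[OF assms(2) tangent(1)] unfolding P_def by blast
  then have "e \<in> {s1..s2}" "- e \<in> {s1..s2}"
    unfolding I[symmetric] by (simp_all add: f_def)
  with \<open>e > 0\<close> have "s1 < s2"
    by auto
  have "inner (rot90 u) (f s) = s" for s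
    using unit_u by (simp add: f_def inner_add_right dot_square_norm)
  then have "f s1 \<noteq> f s2"
    using \<open>s1 < s2\<close> by (metis order.irrefl)
  moreover have "F = closed_segment (f s1) (f s2)"
    using \<open>F = f ` {s. f s \<in> P}\<close> I image_line_atLeastAtMost[of s1 s2] \<open>s1 < s2\<close>
    by (simp add: f_def)
  then have "{p. p extreme_point_of F} = {f s1, f s2}"
    by (auto simp: extreme_point_of_segment)
  ultimately show ?thesis
    unfolding extreme_side by simp
qed

lemma card_extreme_points_tangential_polytope:
  fixes U :: "(real \<times> real) set" and r :: real
  assumes "finite U" "\<forall>u\<in>U. norm u = 1" "r > 0" "bounded (tangential_polytope r U)"
  shows "card {p. p extreme_point_of tangential_polytope r U} = card U"
proof -
  define V where "V = {p. p extreme_point_of tangential_polytope r U}"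
  have side: "finite {p\<in>V. inner p u = r}" "card {p\<in>V. inner p u = r} = 2" if "u \<in> U" for u
    using card_extreme_points_on_side[OF assms that] unfolding V_def by simp_all
  have vertex: "card {u\<in>U. inner p u = r} = 2" if "p \<in> V" for p
  proof -
    have "2 \<le> card {u\<in>U. inner p u = r}"
      using card_active_ge_2_if_extreme_point[OF assms(1)] that by (simp add: V_def)
    moreover have "card {u\<in>U. inner p u = r} \<le> 2"
      using card_active_le_2[OF assms(2)] assms(3) by simp
    ultimately show ?thesis
      by simp
  qed
  have "V \<subseteq> (\<Union>u\<in>U. {p\<in>V. inner p u = r})"
  proof
    fix p assume "p \<in> V"
    then have "{u\<in>U. inner p u = r} \<noteq> {}"
      using vertex[OF \<open>p \<in> V\<close>] by (intro notI) simp
    with \<open>p \<in> V\<close> show "p \<in> (\<Union>u\<in>U. {p\<in>V. inner p u = r})"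
      by blast
  qed
  moreover have "finite (\<Union>u\<in>U. {p\<in>V. inner p u = r})"
    using assms(1) side(1) by (rule finite_UN_I)
  ultimately have "finite V"
    by (rule finite_subset)
  \<comment> \<open>Double counting the incidences between vertices and side lines.\<close>
  have "2 * card V = (\<Sum>p\<in>V. card {u\<in>U. inner p u = r})"
    by (simp add: vertex)
  also have "\<dots> = (\<Sum>u\<in>U. card {p\<in>V. inner p u = r})"
    unfolding card_eq_sum by (rule sum.swap_restrict[OF \<open>finite V\<close> assms(1)])
  also have "\<dots> = 2 * card U"
    by (simp add: side(2))
  finally show ?thesis
    by (simp add: V_def)
qed

lemma gram_determinant_plane:
  fixes a b c :: "real \<times> real"
  shows "inner a a * (inner b b * inner c c - (inner b c)\<^sup>2)
       - inner a b * (inner a b * inner c c - inner b c * inner a c)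
       + inner a c * (inner a b * inner b c - inner b b * inner a c) = 0"
proof -
  obtain a1 a2 b1 b2 c1 c2 where abc: "a = (a1, a2)" "b = (b1, b2)" "c = (c1, c2)"
    by (cases a, cases b, cases c)
  show ?thesis
    unfolding abc inner_Pair inner_real_def by algebra
qed

lemma power2_dist_unit:
  fixes a b :: "'a::real_inner"
  assumes "norm a = 1" "norm b = 1"
  shows "(dist a b)\<^sup>2 = 2 - 2 * inner a b"
  using assms unfolding norm_eq_1
  by (simp add: dist_norm power2_norm_eq_inner inner_diff_left inner_diff_right inner_commute)

lemma equilateral_unit_triangle_inner:
  fixes a b c :: "real \<times> real"
  assumes "norm a = 1" "norm b = 1" "norm c = 1" "a \<noteq> b"
    and "dist a b = dist b c" "dist b c = dist c a"
  shows "inner a b = -1/2 \<and> inner b c = -1/2 \<and> inner c a = -1/2"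
proof -
  define t where "t = inner a b"
  have "2 - 2 * inner a b = 2 - 2 * inner b c" "2 - 2 * inner b c = 2 - 2 * inner c a"
    using assms power2_dist_unit[of a b] power2_dist_unit[of b c] power2_dist_unit[of c a] by metis+
  then have bc: "inner b c = t" and ca: "inner c a = t"
    by (simp_all add: t_def)
  have "t \<noteq> 1"
    using assms(1,2,4) power2_dist_unit[of a b] by (auto simp: t_def)
  \<comment> \<open>Three plane vectors have vanishing Gram determinant.\<close>
  have "1 * (1 * 1 - t\<^sup>2) - t * (t * 1 - t * t) + t * (t * t - 1 * t) = 0"
    using gram_determinant_plane[of a b c] assms(1-3) bc ca
    by (simp add: t_def[symmetric] inner_commute[of a c] dot_square_norm)
  then have "(1 - t)\<^sup>2 * (1 + 2 * t) = 0"
    by algebra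
  then have "1 - t = 0 \<or> 1 + 2 * t = 0"
    by (simp only: mult_eq_0_iff zero_eq_power2)
  with \<open>t \<noteq> 1\<close> have "t = -1/2"
    by auto
  with bc ca show ?thesis
    by (simp add: t_def)
qed

definition regular_unit_triangle :: "(real \<times> real) set \<Rightarrow> bool" where
  "regular_unit_triangle N \<longleftrightarrow>
     card N = 3 \<and> N \<subseteq> sphere 0 1 \<and> (\<forall>u\<in>N. \<forall>v\<in>N. u \<noteq> v \<longrightarrow> inner u v = -1/2)"

lemma regular_unit_triangle_if_equilateral:
  fixes a b c :: "real \<times> real"
  assumes "norm a = 1" "norm b = 1" "norm c = 1" "a \<noteq> b"
    and "dist a b = dist b c" "dist b c = dist c a"
  shows "regular_unit_triangle {a, b, c}"
proof -
  have inner: "inner a b = -1/2" "inner b c = -1/2" "inner c a = -1/2"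
    using equilateral_unit_triangle_inner[OF assms] by auto
  have "a \<noteq> c" "b \<noteq> c"
    using inner assms(1-3) by (auto simp: dot_square_norm)
  then show ?thesis
    using assms(1-4) inner by (auto simp: regular_unit_triangle_def inner_commute)
qed

lemma regular_unit_triangle_unit:
  "regular_unit_triangle N \<Longrightarrow> u \<in> N \<Longrightarrow> norm u = 1"
  by (auto simp: regular_unit_triangle_def)

lemma regular_unit_triangle_uminus:
  assumes "regular_unit_triangle N"
  shows "regular_unit_triangle (uminus ` N)"
proof -
  have "uminus ` N \<subseteq> sphere 0 1"
  proof (rule image_subsetI)
    fix u assume "u \<in> N"
    then show "- u \<in> sphere 0 1"
      using regular_unit_triangle_unit[OF assms] by simp
  qed
  then show ?thesis
    using assms by (simp add: regular_unit_triangle_def card_image ball_simps)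
qed

lemma regular_unit_triangle_inner:
  assumes "regular_unit_triangle N" "u \<in> N" "v \<in> N"
  shows "inner u v = (if u = v then 1 else -1/2)"
  using assms regular_unit_triangle_unit[OF assms(1)]
  by (auto simp: regular_unit_triangle_def dot_square_norm)

lemma regular_unit_triangle_determined_by_vertex:
  assumes "regular_unit_triangle N" "v \<in> N"
  shows "N = insert v {x. norm x = 1 \<and> inner v x = -1/2}"
proof -
  define S where "S = {x. norm x = 1 \<and> inner v x = -1/2}"
  have "v \<noteq> 0"
    using assms by (auto simp: regular_unit_triangle_def)
  then have S: "finite S" "card S \<le> 2"
    using finite_card_sphere_Int_line[of v "-1/2"] by (simp_all add: S_def)
  have "N - {v} \<subseteq> S"
    using assms by (auto simp: regular_unit_triangle_def S_def)
  moreover have "card (N - {v}) = 2"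
    using assms by (simp add: regular_unit_triangle_def)
  ultimately have "N - {v} = S"
    using S by (metis card_seteq)
  then show ?thesis
    using assms(2) by (auto simp: S_def)
qed

lemma regular_unit_triangle_finite: "regular_unit_triangle N \<Longrightarrow> finite N"
  unfolding regular_unit_triangle_def by (metis card.infinite zero_neq_numeral)

lemma regular_unit_triangles_disjoint:
  assumes "regular_unit_triangle N" "regular_unit_triangle N'" "N \<noteq> N'"
  shows "N \<inter> N' = {}"
  using regular_unit_triangle_determined_by_vertex[OF assms(1)]
    regular_unit_triangle_determined_by_vertex[OF assms(2)] assms(3) by blast

lemma card_UN_regular_unit_triangles:
  assumes "finite I" "\<forall>i\<in>I. regular_unit_triangle (N i)" "inj_on N I"
  shows "card (\<Union>i\<in>I. N i) = 3 * card I"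
proof -
  have "N i \<inter> N j = {}" if "i \<in> I" "j \<in> I" "i \<noteq> j" for i j
    using assms(2,3) that by (meson inj_onD regular_unit_triangles_disjoint)
  then show ?thesis
    using assms(1,2)
    by (simp add: card_UN_disjoint regular_unit_triangle_finite regular_unit_triangle_def)
qed

lemma regular_unit_triangle_frame:
  assumes "regular_unit_triangle {a, b, c}"
  shows "a + b + c = 0"
    and "inner x a *\<^sub>R a + inner x b *\<^sub>R b + inner x c *\<^sub>R c = (3/2) *\<^sub>R x"
proof -
  have "a \<noteq> b" "a \<noteq> c" "b \<noteq> c"
    using assms by (auto simp: regular_unit_triangle_def card_insert_if split: if_splits)
  then have inner: "inner a b = -1/2" "inner b c = -1/2" "inner a c = -1/2"
    "inner b a = -1/2" "inner c b = -1/2" "inner c a = -1/2"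
    and unit: "inner a a = 1" "inner b b = 1" "inner c c = 1"
    using regular_unit_triangle_inner[OF assms] by auto
  have "inner (a + b + c) (a + b + c) = 0"
    by (simp add: inner_add_left inner_add_right inner unit)
  then show sum: "a + b + c = 0"
    by simp
  define y where "y = inner x a *\<^sub>R a + inner x b *\<^sub>R b + inner x c *\<^sub>R c - (3/2) *\<^sub>R x"
  have "inner y v = - inner x (a + b + c) / 2" if "v \<in> {a, b}" for v
    using that by (auto simp: y_def inner_add_left inner_diff_left inner_add_right inner unit
        inner_commute[of x] algebra_simps)
  then have orth: "inner y a = 0" "inner y b = 0"
    by (simp_all add: sum)
  have "(inner a b)\<^sup>2 + (inner (rot90 a) b)\<^sup>2 = 1"
    using inner_rot90_Lagrange[of a b] unit by (simp add: dot_square_norm[symmetric])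
  then have "(inner (rot90 a) b)\<^sup>2 = 3/4"
    using inner by (simp add: power2_eq_square)
  then have "inner (rot90 a) b \<noteq> 0"
    by auto
  then have "y = 0"
    using orthogonal_to_independent_pair orth by blast
  then show "inner x a *\<^sub>R a + inner x b *\<^sub>R b + inner x c *\<^sub>R c = (3/2) *\<^sub>R x"
    by (simp add: y_def)
qed

lemma convex_hull_regular_unit_triangle:
  assumes "regular_unit_triangle N"
  shows "convex hull N = tangential_polytope (1/2) (uminus ` N)"
proof -
  obtain a b c where N: "N = {a, b, c}"
    using assms by (metis card_3_iff regular_unit_triangle_def)
  note frame = regular_unit_triangle_frame[OF assms[unfolded N]]
  show ?thesis
  proof
    have "N \<subseteq> tangential_polytope (1/2) (uminus ` N)"
      using regular_unit_triangle_inner[OF assms] by (auto simp: tangential_polytope_def)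
    then show "convex hull N \<subseteq> tangential_polytope (1/2) (uminus ` N)"
      by (simp add: convex_tangential_polytope hull_minimal)
  next
    show "tangential_polytope (1/2) (uminus ` N) \<subseteq> convex hull N"
    proof
      fix x assume "x \<in> tangential_polytope (1/2) (uminus ` N)"
      then have ge: "-1/2 \<le> inner x a" "-1/2 \<le> inner x b" "-1/2 \<le> inner x c"
        by (auto simp: tangential_polytope_def N)
      \<comment> \<open>Barycentric coordinates, by the frame identity of \<open>regular_unit_triangle_frame\<close>.\<close>
      define w where "w v = (1 + 2 * inner x v) / 3" for v
      have "inner x a + inner x b + inner x c = 0"
        by (metis frame(1) inner_add_right inner_zero_right)
      then have wsum: "w a + w b + w c = 1"
        by (simp add: w_def field_simps)
      have "w a *\<^sub>R a + w b *\<^sub>R b + w c *\<^sub>R c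
          = (1/3) *\<^sub>R (a + b + c) + (2/3) *\<^sub>R (inner x a *\<^sub>R a + inner x b *\<^sub>R b + inner x c *\<^sub>R c)"
        by (simp add: w_def add_divide_distrib scaleR_add_left scaleR_add_right)
      also have "\<dots> = x"
        by (simp add: frame)
      finally have "x = w a *\<^sub>R a + w b *\<^sub>R b + w c *\<^sub>R c"
        by simp
      with wsum show "x \<in> convex hull N"
        using ge unfolding N convex_hull_3 w_def by force
    qed
  qed
qed

lemma C_eq_cball: "C = cball 0 1"
proof -
  have "z \<in> C \<longleftrightarrow> norm z \<le> 1" for z :: "real \<times> real"
    by (cases z) (simp add: C_def Cd_def norm_Pair)
  then show ?thesis
    by auto
qed

lemma bounded_E:
  assumes "T \<in> E"
  shows "bounded T"
proof -
  have "T \<subseteq> C"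
    using assms unfolding E_def by blast
  then show ?thesis
    unfolding C_eq_cball by (rule bounded_subset[OF bounded_cball])
qed

lemma E_eq_tangential_polytope:
  assumes "T \<in> E"
  obtains N where "regular_unit_triangle N" "T = tangential_polytope (1/2) N"
proof -
  obtain a b c where T: "T = convex hull {a, b, c}" and "a \<noteq> b"
    and "dist a b = dist b c" "dist b c = dist c a"
    and "a \<in> frontier C" "b \<in> frontier C" "c \<in> frontier C"
    using assms unfolding E_def by blast
  moreover have "frontier C = sphere 0 1"
    by (simp add: C_eq_cball)
  ultimately have "regular_unit_triangle {a, b, c}"
    by (intro regular_unit_triangle_if_equilateral) simp_all
  moreover from this have "T = tangential_polytope (1/2) (uminus ` {a, b, c})"
    unfolding T by (rule convex_hull_regular_unit_triangle)
  ultimately show ?thesis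
    using that regular_unit_triangle_uminus by blast
qed

lemma E_family_normals:
  assumes "\<forall>i\<in>I. T i \<in> E" "inj_on T I"
  obtains N where "\<forall>i\<in>I. regular_unit_triangle (N i) \<and> T i = tangential_polytope (1/2) (N i)"
    and "inj_on N I"
proof -
  have "\<forall>i\<in>I. \<exists>N. regular_unit_triangle N \<and> T i = tangential_polytope (1/2) N"
    using E_eq_tangential_polytope assms(1) by blast
  then obtain N where N: "\<forall>i\<in>I. regular_unit_triangle (N i) \<and> T i = tangential_polytope (1/2) (N i)"
    by (rule bchoice[THEN exE])
  moreover have "inj_on N I"
  proof (rule inj_onI)
    fix i j assume "i \<in> I" "j \<in> I" "N i = N j"
    then have "T i = T j"
      using N by simp
    with assms(2) \<open>i \<in> I\<close> \<open>j \<in> I\<close> show "i = j"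
      by (meson inj_onD)
  qed
  ultimately show ?thesis
    using that by blast
qed

theorem mainTheorem12:
  fixes n :: nat and T :: "nat \<Rightarrow> (real \<times> real) set"
  assumes "n \<ge> 2"
    and "\<forall>i\<in>{1..n}. T i \<in> E"
    and "inj_on T {1..n}"
  shows "card (polygon_vertices (\<Inter>i\<in>{1..n}. T i)) = 3 * n"
proof -
  obtain N where N: "\<forall>i\<in>{1..n}. regular_unit_triangle (N i) \<and> T i = tangential_polytope (1/2) (N i)"
    and "inj_on N {1..n}"
    using E_family_normals assms(2,3) by blast
  define U where "U = (\<Union>i\<in>{1..n}. N i)"
  have "card U = 3 * n"
    using N \<open>inj_on N {1..n}\<close> by (simp add: U_def card_UN_regular_unit_triangles)
  have P: "(\<Inter>i\<in>{1..n}. T i) = tangential_polytope (1/2) U"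
    using N by (simp add: U_def flip: tangential_polytope_UN)
  have "1 \<in> {1..n}"
    using assms(1) by simp
  then have "bounded (\<Inter>i\<in>{1..n}. T i)"
    using bounded_E[of "T 1"] assms(2) by (meson INT_lower bounded_subset)
  moreover have "finite U" "\<forall>u\<in>U. norm u = 1"
    using N regular_unit_triangle_finite regular_unit_triangle_unit by (auto simp: U_def)
  ultimately show ?thesis
    unfolding polygon_vertices_def P \<open>card U = 3 * n\<close>[symmetric]
    by (intro card_extreme_points_tangential_polytope) auto
qed

end
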